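(* Let $\beta\in(0,1)$. There exists $C_\beta>0$ such that for every $N\in\mathbb{N}$, every minimizer $h\in\{1,\dots,N\}$ of $\mathcal{H}_{\beta,N}$ and every minimizer $l\in\{1,\dots,N\}$ of $\mathcal{L}_{\beta,N}$ satisfy $$|h-h_*|\le C_\beta N^{1/4},\qquad |l-l_*|\le C_\beta N^{1/4},$$ where $h_*=(1-\beta)^{1/2}N^{1/2}$ and $l_*=(1-\beta)^{-1/2}N^{1/2}$. Moreover, if $\beta\notin\mathbb{Q}$, the minimizers of $\mathcal{H}_{\beta,N}$ and of $\mathcal{L}_{\beta,N}$ are unique.
   Context: For $N\in\mathbb{N}$ and $\beta\in(0,1)$ define $\mathcal{H}_{\beta,N},\mathcal{L}_{\beta,N}:\{1,\dots,N\}\to\mathbb{R}$ by $\mathcal{H}_{\beta,N}(h)=2h+2(1-\beta)\lceil N/h\rceil$ and $\mathcal{L}_{\beta,N}(l)=2\lceil N/l\rceil+2(1-\beta)l$. *)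

theory Defs
  imports Complex_Main
begin

definition calH :: "real \<Rightarrow> nat \<Rightarrow> nat \<Rightarrow> real" where
  "calH \<beta> N h = 2 * real h + 2 * (1 - \<beta>) * real_of_int \<lceil>real N / real h\<rceil>"

definition calL :: "real \<Rightarrow> nat \<Rightarrow> nat \<Rightarrow> real" where
  "calL \<beta> N l = 2 * real_of_int \<lceil>real N / real l\<rceil> + 2 * (1 - \<beta>) * real l"

definition is_minimizer :: "(nat \<Rightarrow> real) \<Rightarrow> nat \<Rightarrow> nat \<Rightarrow> bool" where
  "is_minimizer f N m \<longleftrightarrow> m \<in> {1..N} \<and> (\<forall>k\<in>{1..N}. f m \<le> f k)"

end

theory Submission
  imports Defs
begin

text \<open>Both costs are instances of \<open>2 p x + 2 q \<lceil>N/x\<rceil>\<close>, which differs by less than \<open>2 q\<close>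
from the relaxed cost \<open>g x = 2 p x + 2 q N/x\<close>. With \<open>s = sqrt (q N / p)\<close> one has
\<open>g x - g s = 2 p (x - s)\<^sup>2 / x\<close>, so comparing a minimiser \<open>m\<close> with \<open>\<lceil>s\<rceil>\<close> gives
\<open>(m - s)\<^sup>2 \<le> (1 + q/p) m\<close>; hence \<open>|m - s| = O(sqrt s) = O(root 4 N)\<close>.
Uniqueness: two minimisers have equal cost, and an equation \<open>p x + q a = p y + q b\<close> with
integers \<open>a, b\<close> and \<open>x \<noteq> y\<close> would make \<open>p / q\<close> rational.\<close>

definition ceiling_cost :: "real \<Rightarrow> real \<Rightarrow> nat \<Rightarrow> nat \<Rightarrow> real" where
  "ceiling_cost p q N x = 2 * p * real x + 2 * q * real_of_int \<lceil>real N / real x\<rceil>"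

lemma calH_eq_ceiling_cost: "calH \<beta> N = ceiling_cost 1 (1 - \<beta>) N"
  by (simp add: fun_eq_iff calH_def ceiling_cost_def)

lemma calL_eq_ceiling_cost: "calL \<beta> N = ceiling_cost (1 - \<beta>) 1 N"
  by (simp add: fun_eq_iff calL_def ceiling_cost_def)

lemma ceiling_cost_lower_bound:
  assumes "0 \<le> q"
  shows "2 * p * real x + 2 * q * (real N / real x) \<le> ceiling_cost p q N x"
  using mult_left_mono[OF le_of_int_ceiling[of "real N / real x"] assms]
  by (simp add: ceiling_cost_def)

lemma ceiling_cost_upper_bound:
  assumes "0 \<le> q"
  shows "ceiling_cost p q N x \<le> 2 * p * real x + 2 * q * (real N / real x) + 2 * q"
proof -
  have "2 * q * real_of_int \<lceil>real N / real x\<rceil> \<le> 2 * q * (real N / real x + 1)"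
    using assms by (intro mult_left_mono) linarith+
  then show ?thesis
    by (simp add: ceiling_cost_def distrib_left)
qed

lemma relaxed_cost_excess:
  fixes p q s x N :: real
  assumes "p \<noteq> 0" "x \<noteq> 0" "s\<^sup>2 = q * N / p"
  shows "2 * p * x + 2 * q * (N / x) = 4 * p * s + 2 * p * (x - s)\<^sup>2 / x"
proof -
  have "q * N = p * s\<^sup>2"
    using assms by (simp add: field_simps)
  then show ?thesis
    using assms by (simp add: field_simps power2_eq_square)
qed

lemma is_minimizer_unique:
  assumes "inj_on f {1..N}" "is_minimizer f N m" "is_minimizer f N m'"
  shows "m = m'"
  using assms unfolding is_minimizer_def inj_on_def by (meson antisym)

lemma ceiling_cost_minimizer_sq_bound:
  assumes p: "0 < p" and q: "0 \<le> q"
    and s: "s\<^sup>2 = q * N / p" "0 < s" "s \<le> N"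
    and m: "is_minimizer (ceiling_cost p q N) N m"
  shows "(real m - s)\<^sup>2 \<le> (1 + q / p) * real m"
proof -
  have m_range: "1 \<le> m" "m \<le> N"
    using m by (auto simp: is_minimizer_def)
  define k where "k = nat \<lceil>s\<rceil>"
  have k_range: "1 \<le> k" "k \<le> N"
    using s(2,3) by (auto simp: k_def le_nat_iff ceiling_le_iff)
  have "(real k - s)\<^sup>2 \<le> 1"
    using s(2) by (simp add: k_def abs_square_le_1) linarith
  then have k_excess: "2 * p * (real k - s)\<^sup>2 / real k \<le> 2 * p"
    using p k_range by (simp add: divide_le_eq mult_le_cancel_left1)
  have "4 * p * s + 2 * p * (real m - s)\<^sup>2 / real m \<le> ceiling_cost p q N m"
    using ceiling_cost_lower_bound[OF q, where p = p and N = N and x = m]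
      relaxed_cost_excess[OF _ _ s(1), of "real m"] p m_range
    by simp
  also have "\<dots> \<le> ceiling_cost p q N k"
    using m k_range by (simp add: is_minimizer_def)
  also have "\<dots> \<le> 4 * p * s + 2 * p * (real k - s)\<^sup>2 / real k + 2 * q"
    using ceiling_cost_upper_bound[OF q, where p = p and N = N and x = k]
      relaxed_cost_excess[OF _ _ s(1), of "real k"] p k_range
    by simp
  finally have "2 * p * (real m - s)\<^sup>2 / real m \<le> 2 * p + 2 * q"
    using k_excess by linarith
  then show ?thesis
    using p m_range by (simp add: divide_le_eq field_simps)
qed

lemma abs_diff_le_of_sq_le:
  fixes m s K :: real
  assumes sq: "(m - s)\<^sup>2 \<le> K * m" and "0 \<le> K" "0 \<le> s"
  shows "\<bar>m - s\<bar> \<le> K + sqrt (K * s)"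
proof (rule ccontr)
  define d where "d = \<bar>m - s\<bar>"
  assume "\<not> ?thesis"
  then have d_big: "K + sqrt (K * s) < d"
    by (simp add: d_def)
  have root_sq: "sqrt (K * s) * sqrt (K * s) = K * s"
    using assms by simp
  have "K * m \<le> K * (s + d)"
    using \<open>0 \<le> K\<close> by (intro mult_left_mono) (auto simp: d_def)
  then have "d * d \<le> K * s + K * d"
    using sq by (simp add: d_def power2_eq_square distrib_left)
  also have "\<dots> \<le> d * sqrt (K * s) + K * d"
    using mult_right_mono[of "sqrt (K * s)" d "sqrt (K * s)"] root_sq d_big \<open>0 \<le> K\<close>
    by simp
  also have "\<dots> < d * d"
  proof -
    have "0 \<le> sqrt (K * s)"
      using assms by simp
    then have "0 < d"
      using d_big \<open>0 \<le> K\<close> by linarith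
    from mult_strict_left_mono[OF d_big this] show ?thesis
      by (simp add: algebra_simps)
  qed
  finally show False
    by simp
qed

lemma ceiling_cost_minimizer_deviation:
  assumes p: "0 < p" and q: "0 < q"
  shows "\<exists>C>0. \<forall>N m. is_minimizer (ceiling_cost p q N) N m \<longrightarrow>
           \<bar>real m - sqrt (q / p) * sqrt (real N)\<bar> \<le> C * root 4 (real N)"
proof -
  define \<rho> where "\<rho> = q / p"
  define K where "K = 1 + \<rho>"
  have \<rho>: "0 < \<rho>" and K: "1 \<le> K"
    using p q by (simp_all add: \<rho>_def K_def)
  define C where "C = K + sqrt (K * sqrt \<rho>) + \<rho>"
  have "\<bar>real m - sqrt \<rho> * sqrt (real N)\<bar> \<le> C * root 4 (real N)"
    if m: "is_minimizer (ceiling_cost p q N) N m" for N m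
  proof -
    define s where "s = sqrt \<rho> * sqrt (real N)"
    define r where "r = root 4 (real N)"
    have N: "1 \<le> N" and m_le: "m \<le> N"
      using m by (auto simp: is_minimizer_def)
    have r: "1 \<le> r"
      using N by (simp add: r_def)
    have s_pos: "0 < s" and s_sq: "s\<^sup>2 = q * N / p"
      using \<rho> N by (simp_all add: s_def \<rho>_def power_mult_distrib)
    show ?thesis
    proof (cases "s \<le> N")
      case True
      have "sqrt (sqrt (real N)) = r"
        using real_root_mult_exp[of 2 2 "real N"] by (simp add: r_def sqrt_def)
      then have sqrt_Ks: "sqrt (K * s) = sqrt (K * sqrt \<rho>) * r"
        by (simp add: s_def real_sqrt_mult mult.assoc)
      have sq: "(real m - s)\<^sup>2 \<le> K * real m"
        using ceiling_cost_minimizer_sq_bound[OF p less_imp_le[OF q] s_sq s_pos True m]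
        by (simp add: K_def \<rho>_def)
      have "\<bar>real m - s\<bar> \<le> K + sqrt (K * sqrt \<rho>) * r"
        using abs_diff_le_of_sq_le[OF sq] K s_pos sqrt_Ks by simp
      also have "\<dots> \<le> C * r"
      proof -
        have "K \<le> K * r" "0 \<le> \<rho> * r"
          using K r \<rho> by simp_all
        then show ?thesis
          by (simp add: C_def algebra_simps)
      qed
      finally show ?thesis
        by (simp add: s_def r_def)
    next
      case False
      then have "real N * s < s * s"
        using N by (intro mult_strict_right_mono) auto
      also have "s * s = real N * \<rho>"
        using s_sq p by (simp add: \<rho>_def power2_eq_square)
      finally have "s < \<rho>"
        using N by (simp add: mult.commute)
      moreover have "\<rho> \<le> \<rho> * r"
        using r \<rho> by simp
      moreover have "real m \<le> real N"
        using m_le by simp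
      ultimately have "\<bar>real m - s\<bar> \<le> \<rho> * r"
        using False unfolding abs_le_iff by linarith
      also have "\<dots> \<le> C * r"
        using K r \<rho> by (intro mult_right_mono) (auto simp: C_def)
      finally show ?thesis
        by (simp add: s_def r_def)
    qed
  qed
  moreover have "0 < C"
    using K \<rho> by (simp add: C_def add_pos_nonneg)
  ultimately show ?thesis
    by (auto simp: \<rho>_def)
qed

lemma inj_ceiling_cost:
  assumes "p / q \<notin> \<rat>"
  shows "inj (ceiling_cost p q N)"
proof
  fix x y
  assume eq: "ceiling_cost p q N x = ceiling_cost p q N y"
  show "x = y"
  proof (rule ccontr)
    assume "x \<noteq> y"
    define a where "a = real_of_int \<lceil>real N / real x\<rceil>"
    define b where "b = real_of_int \<lceil>real N / real y\<rceil>"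
    have "q \<noteq> 0"
      using assms by auto
    have "p * (real x - real y) = q * (b - a)"
      using eq by (simp add: ceiling_cost_def a_def b_def algebra_simps)
    then have "p / q = (b - a) / (real x - real y)"
      using \<open>x \<noteq> y\<close> \<open>q \<noteq> 0\<close> by (simp add: field_simps)
    moreover have "(b - a) / (real x - real y) \<in> \<rat>"
      by (simp add: a_def b_def)
    ultimately show False
      using assms by simp
  qed
qed

lemma one_minus_notin_Rats:
  fixes \<beta> :: real
  assumes "\<beta> \<notin> \<rat>"
  shows "1 - \<beta> \<notin> \<rat>"
  using assms Rats_diff[OF Rats_1, of "1 - \<beta>"] by auto

lemma inj_calH:
  assumes "\<beta> \<notin> \<rat>"
  shows "inj (calH \<beta> N)"
  using inj_ceiling_cost[of 1 "1 - \<beta>" N] one_minus_notin_Rats[OF assms]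
  by (simp add: calH_eq_ceiling_cost divide_inverse)

lemma inj_calL:
  assumes "\<beta> \<notin> \<rat>"
  shows "inj (calL \<beta> N)"
  using inj_ceiling_cost[of "1 - \<beta>" 1 N] one_minus_notin_Rats[OF assms]
  by (simp add: calL_eq_ceiling_cost)

theorem lemma4p3:
  fixes \<beta> :: real
  assumes "0 < \<beta>" and "\<beta> < 1"
  shows "(\<exists>C>0. \<forall>N::nat. \<forall>h l.
            (is_minimizer (calH \<beta> N) N h \<longrightarrow>
               \<bar>real h - sqrt (1 - \<beta>) * sqrt (real N)\<bar> \<le> C * root 4 (real N)) \<and>
            (is_minimizer (calL \<beta> N) N l \<longrightarrow>
               \<bar>real l - sqrt (real N) / sqrt (1 - \<beta>)\<bar> \<le> C * root 4 (real N)))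
       \<and> (\<beta> \<notin> \<rat> \<longrightarrow>
            (\<forall>N::nat. \<forall>h h'. is_minimizer (calH \<beta> N) N h \<longrightarrow> is_minimizer (calH \<beta> N) N h' \<longrightarrow> h = h') \<and>
            (\<forall>N::nat. \<forall>l l'. is_minimizer (calL \<beta> N) N l \<longrightarrow> is_minimizer (calL \<beta> N) N l' \<longrightarrow> l = l'))"
proof -
  have "0 < 1 - \<beta>"
    using \<open>\<beta> < 1\<close> by simp
  obtain C\<^sub>H where "0 < C\<^sub>H" and H: "\<And>N h. is_minimizer (calH \<beta> N) N h \<Longrightarrow>
      \<bar>real h - sqrt (1 - \<beta>) * sqrt (real N)\<bar> \<le> C\<^sub>H * root 4 (real N)"
    using ceiling_cost_minimizer_deviation[of 1 "1 - \<beta>"] \<open>0 < 1 - \<beta>\<close>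
    by (auto simp: calH_eq_ceiling_cost)
  obtain C\<^sub>L where L: "\<And>N l. is_minimizer (calL \<beta> N) N l \<Longrightarrow>
      \<bar>real l - sqrt (real N) / sqrt (1 - \<beta>)\<bar> \<le> C\<^sub>L * root 4 (real N)"
    using ceiling_cost_minimizer_deviation[of "1 - \<beta>" 1] \<open>0 < 1 - \<beta>\<close>
    by (auto simp: calL_eq_ceiling_cost real_sqrt_divide)
  show ?thesis
  proof (intro conjI impI allI exI[of _ "max C\<^sub>H C\<^sub>L"])
    show "0 < max C\<^sub>H C\<^sub>L"
      using \<open>0 < C\<^sub>H\<close> by simp
  next
    fix N h
    assume "is_minimizer (calH \<beta> N) N h"
    from H[OF this] show "\<bar>real h - sqrt (1 - \<beta>) * sqrt (real N)\<bar> \<le> max C\<^sub>H C\<^sub>L * root 4 (real N)"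
      by (rule order_trans) (simp add: mult_right_mono)
  next
    fix N l
    assume "is_minimizer (calL \<beta> N) N l"
    from L[OF this] show "\<bar>real l - sqrt (real N) / sqrt (1 - \<beta>)\<bar> \<le> max C\<^sub>H C\<^sub>L * root 4 (real N)"
      by (rule order_trans) (simp add: mult_right_mono)
  next
    fix N h h'
    assume "\<beta> \<notin> \<rat>" "is_minimizer (calH \<beta> N) N h" "is_minimizer (calH \<beta> N) N h'"
    then show "h = h'"
      by (intro is_minimizer_unique[OF inj_on_subset[OF inj_calH subset_UNIV]])
  next
    fix N l l'
    assume "\<beta> \<notin> \<rat>" "is_minimizer (calL \<beta> N) N l" "is_minimizer (calL \<beta> N) N l'"
    then show "l = l'"
      by (intro is_minimizer_unique[OF inj_on_subset[OF inj_calL subset_UNIV]])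
  qed
qed

end
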